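(* Let $Y$ be a nonnegative random variable with mean $\mu$ and variance $\sigma^2$, both finite and positive, and let $Y^s$ be defined on the same probability space as $Y$, have the $Y$-size bias distribution, and satisfy $Y^s\ge Y$ with probability one. Let $W=(Y-\mu)/\sigma$ and $W^s=(Y^s-\mu)/\sigma$. Then for any $z\in\mathbb{R}$ and $a>0$, $$\frac{\mu}{\sigma}E\left[(W^s-W)\mathbf{1}_{\{W^s-W\le a\}}\mathbf{1}_{\{z\le W\le z+a\}}\right]\le a.$$
   Context: For a nonnegative random variable $Y$ with finite positive mean $\mu$, a random variable $Y^s$ has the $Y$-size bias distribution if $E[Yg(Y)]=\mu E[g(Y^s)]$ for all bounded continuous functions $g$. *)

theory Defs
  imports "HOL-Probability.Probability"
begin

definition size_bias :: "'a measure \<Rightarrow> ('a \<Rightarrow> real) \<Rightarrow> ('a \<Rightarrow> real) \<Rightarrow> bool" where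
  "size_bias M Y Ys \<longleftrightarrow>
     (\<forall>g :: real \<Rightarrow> real. continuous_on UNIV g \<and> bounded (range g) \<longrightarrow>
        (\<integral>x. Y x * g (Y x) \<partial>M) = (\<integral>x. Y x \<partial>M) * (\<integral>x. g (Ys x) \<partial>M))"

end

theory Submission
  imports Defs
begin

text \<open>Let \<open>f\<close> be the ramp that rises with slope 1 from \<open>-a\<close> to \<open>a\<close> over \<open>[z, z + 2a]\<close>.
  Since \<open>W \<le> W\<^sup>s\<close>, the integrand is dominated by \<open>f(W\<^sup>s) - f(W)\<close>. By the size-bias identity,
  \<open>\<mu> E[f(W\<^sup>s) - f(W)] = E[(Y - \<mu>) f(W)]\<close>, which is at most \<open>a E|Y - \<mu>| \<le> a \<sigma>\<close>.\<close>

definition ramp :: "real \<Rightarrow> real \<Rightarrow> real \<Rightarrow> real" where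
  "ramp c a w = max (- a) (min a (w - c))"

lemma ramp_mono: "u \<le> v \<Longrightarrow> ramp c a u \<le> ramp c a v"
  unfolding ramp_def by auto

lemma abs_ramp_le: "0 \<le> a \<Longrightarrow> \<bar>ramp c a w\<bar> \<le> a"
  unfolding ramp_def by auto

lemma continuous_on_ramp: "continuous_on UNIV (ramp c a)"
  unfolding ramp_def by (intro continuous_intros)

lemma increment_le_ramp_diff:
  assumes "u \<le> v"
  shows "(v - u) * indicator {t. t \<le> a} (v - u) * indicator {z..z + a} u
           \<le> ramp (z + a) a v - ramp (z + a) a u"
proof (cases "v - u \<le> a \<and> z \<le> u \<and> u \<le> z + a")
  case True
  then have "ramp (z + a) a v = v - z - a" "ramp (z + a) a u = u - z - a"
    using assms unfolding ramp_def by auto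
  then show ?thesis using True by simp
next
  case False
  then show ?thesis using ramp_mono[OF assms, of "z + a" a] by (auto simp: indicator_def)
qed

lemma (in prob_space) expectation_abs_deviation_le_sqrt_variance:
  assumes "integrable M X" and "integrable M (\<lambda>x. (X x)\<^sup>2)"
  shows "expectation (\<lambda>x. \<bar>X x - expectation X\<bar>) \<le> sqrt (variance X)"
proof -
  let ?D = "\<lambda>x. \<bar>X x - expectation X\<bar>"
  have "integrable M (\<lambda>x. (?D x)\<^sup>2)"
    using assms by (simp add: power2_diff)
  then have "0 \<le> expectation (\<lambda>x. (?D x)\<^sup>2) - (expectation ?D)\<^sup>2"
    using variance_positive[of ?D] variance_eq[of ?D] assms(1) by simp
  then have "(expectation ?D)\<^sup>2 \<le> variance X" by simp
  then show ?thesis by (simp add: real_le_rsqrt)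
qed

lemma (in finite_measure) integrable_bounded_continuous_comp:
  fixes g :: "real \<Rightarrow> real"
  assumes "continuous_on UNIV g" and "\<And>y. \<bar>g y\<bar> \<le> B" and "X \<in> borel_measurable M"
  shows "integrable M (\<lambda>x. g (X x))"
proof (rule integrable_const_bound[where B = B])
  show "(\<lambda>x. g (X x)) \<in> borel_measurable M"
    using borel_measurable_continuous_onI[OF assms(1)] assms(3) by (rule measurable_compose_rev)
qed (simp add: assms(2))

lemma (in prob_space) size_bias_covariance:
  assumes "size_bias M Y Ys" and "integrable M Y" and "Ys \<in> borel_measurable M"
    and "continuous_on UNIV g" and B: "\<And>y. \<bar>g y\<bar> \<le> B"
  shows "expectation (\<lambda>x. (Y x - expectation Y) * g (Y x))
           = expectation Y * expectation (\<lambda>x. g (Ys x) - g (Y x))"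
proof -
  have Y_meas: "Y \<in> borel_measurable M"
    using assms(2) by (rule borel_measurable_integrable)
  have int_gY: "integrable M (\<lambda>x. g (Y x))" and int_gYs: "integrable M (\<lambda>x. g (Ys x))"
    using integrable_bounded_continuous_comp[OF assms(4) B] Y_meas assms(3) by auto
  have "bounded (range g)"
    using B by (auto simp: bounded_iff)
  have "integrable M (\<lambda>x. Y x * g (Y x))"
  proof (rule Bochner_Integration.integrable_bound[OF integrable_mult_right[OF assms(2), of B]])
    show "(\<lambda>x. Y x * g (Y x)) \<in> borel_measurable M"
      using Y_meas borel_measurable_integrable[OF int_gY] by (rule borel_measurable_times)
    show "AE x in M. norm (Y x * g (Y x)) \<le> norm (B * Y x)"
      using B order_trans[OF B abs_ge_self]
      by (auto simp: abs_mult mult.commute[of B] intro!: mult_left_mono)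
  qed
  then have "expectation (\<lambda>x. (Y x - expectation Y) * g (Y x))
               = expectation (\<lambda>x. Y x * g (Y x)) - expectation Y * expectation (\<lambda>x. g (Y x))"
    using int_gY by (simp add: left_diff_distrib)
  also have "expectation (\<lambda>x. Y x * g (Y x)) = expectation Y * expectation (\<lambda>x. g (Ys x))"
    using assms(1,4) \<open>bounded (range g)\<close> unfolding size_bias_def by blast
  finally show ?thesis
    using int_gY int_gYs by (simp add: right_diff_distrib)
qed

lemma (in prob_space) expectation_deviation_mult_le:
  assumes "integrable M X" and "integrable M (\<lambda>x. (X x)\<^sup>2)"
    and "g \<in> borel_measurable borel" and "\<And>y. \<bar>g y\<bar> \<le> B"
  shows "expectation (\<lambda>x. (X x - expectation X) * g (X x)) \<le> B * sqrt (variance X)"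
proof -
  let ?D = "\<lambda>x. \<bar>X x - expectation X\<bar>"
  have "B \<ge> 0"
    using abs_ge_zero[of "g 0"] assms(4)[of 0] by linarith
  have abs_le: "\<bar>(X x - expectation X) * g (X x)\<bar> \<le> B * ?D x" for x
  proof -
    have "\<bar>(X x - expectation X) * g (X x)\<bar> = ?D x * \<bar>g (X x)\<bar>"
      by (rule abs_mult)
    also have "\<dots> \<le> ?D x * B"
      by (rule mult_left_mono[OF assms(4)]) simp
    finally show ?thesis
      by (simp add: mult.commute)
  qed
  have "expectation (\<lambda>x. (X x - expectation X) * g (X x)) \<le> expectation (\<lambda>x. B * ?D x)"
  proof (rule integral_mono)
    show int_bound: "integrable M (\<lambda>x. B * ?D x)"
      using assms(1) by simp
    have "(\<lambda>x. (X x - expectation X) * g (X x)) \<in> borel_measurable M"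
      using borel_measurable_integrable[OF assms(1)] assms(3) by measurable
    then show "integrable M (\<lambda>x. (X x - expectation X) * g (X x))"
      by (rule Bochner_Integration.integrable_bound[OF int_bound])
         (use abs_le \<open>B \<ge> 0\<close> in simp)
    show "(X x - expectation X) * g (X x) \<le> B * ?D x" for x
      using abs_le[of x] by (rule order_trans[OF abs_ge_self])
  qed
  also have "\<dots> \<le> B * sqrt (variance X)"
    using expectation_abs_deviation_le_sqrt_variance[OF assms(1,2)] \<open>B \<ge> 0\<close>
    by (simp add: mult_left_mono)
  finally show ?thesis .
qed

lemma (in prob_space) size_bias_increment_le:
  assumes "size_bias M Y Ys"
    and "integrable M Y" and "integrable M (\<lambda>x. (Y x)\<^sup>2)" and "Ys \<in> borel_measurable M"
    and "continuous_on UNIV g" and "\<And>y. \<bar>g y\<bar> \<le> B"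
  shows "expectation Y * expectation (\<lambda>x. g (Ys x) - g (Y x)) \<le> B * sqrt (variance Y)"
  using size_bias_covariance[OF assms(1,2,4,5,6)]
    expectation_deviation_mult_le[OF assms(2,3) borel_measurable_continuous_onI[OF assms(5)] assms(6)]
  by simp

lemma (in prob_space) expectation_truncated_increment_le_ramp_diff:
  assumes "W \<in> borel_measurable M" and "Ws \<in> borel_measurable M"
    and "AE x in M. W x \<le> Ws x" and "0 < a"
  shows "expectation (\<lambda>x. (Ws x - W x) * indicator {t. t \<le> a} (Ws x - W x)
                            * indicator {z..z + a} (W x))
           \<le> expectation (\<lambda>x. ramp (z + a) a (Ws x) - ramp (z + a) a (W x))"
proof (rule integral_mono_AE)
  have "AE x in M. \<bar>(Ws x - W x) * indicator {t. t \<le> a} (Ws x - W x)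
                      * indicator {z..z + a} (W x)\<bar> \<le> a"
    using assms(3) by eventually_elim (use assms(4) in \<open>auto simp: indicator_def\<close>)
  moreover have "(\<lambda>x. (Ws x - W x) * indicator {t. t \<le> a} (Ws x - W x)
                   * indicator {z..z + a} (W x)) \<in> borel_measurable M"
    using assms(1,2) by measurable
  ultimately show "integrable M (\<lambda>x. (Ws x - W x) * indicator {t. t \<le> a} (Ws x - W x)
                                       * indicator {z..z + a} (W x))"
    by (intro integrable_const_bound[where B = a]) auto
  show "integrable M (\<lambda>x. ramp (z + a) a (Ws x) - ramp (z + a) a (W x))"
    using integrable_bounded_continuous_comp[OF continuous_on_ramp abs_ramp_le] assms(1,2,4)
    by auto
  show "AE x in M. (Ws x - W x) * indicator {t. t \<le> a} (Ws x - W x) * indicator {z..z + a} (W x)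
                     \<le> ramp (z + a) a (Ws x) - ramp (z + a) a (W x)"
    using assms(3) by eventually_elim (rule increment_le_ramp_diff)
qed

theorem lemma2p1:
  fixes M :: "'a measure" and Y Ys :: "'a \<Rightarrow> real" and z a :: real
  assumes "prob_space M"
    and "Y \<in> borel_measurable M" and "Ys \<in> borel_measurable M"
    and "AE x in M. 0 \<le> Y x"
    and "integrable M Y" and "integrable M (\<lambda>x. (Y x)\<^sup>2)"
    and "(\<integral>x. Y x \<partial>M) > 0"
    and "prob_space.variance M Y > 0"
    and "size_bias M Y Ys"
    and "AE x in M. Y x \<le> Ys x"
    and "a > 0"
  shows "let \<mu> = (\<integral>x. Y x \<partial>M); \<sigma> = sqrt (prob_space.variance M Y);
             W = (\<lambda>x. (Y x - \<mu>) / \<sigma>); Ws = (\<lambda>x. (Ys x - \<mu>) / \<sigma>)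
         in \<mu> / \<sigma> * (\<integral>x. (Ws x - W x) * indicator {t. Ws t - W t \<le> a} x
                         * indicator {t. z \<le> W t \<and> W t \<le> z + a} x \<partial>M) \<le> a"
proof -
  interpret prob_space M by fact
  define \<mu> where "\<mu> = expectation Y"
  define \<sigma> where "\<sigma> = sqrt (variance Y)"
  define W where "W x = (Y x - \<mu>) / \<sigma>" for x
  define Ws where "Ws x = (Ys x - \<mu>) / \<sigma>" for x
  let ?T = "expectation (\<lambda>x. (Ws x - W x) * indicator {t. t \<le> a} (Ws x - W x)
                                * indicator {z..z + a} (W x))"
  let ?R = "expectation (\<lambda>x. ramp (z + a) a (Ws x) - ramp (z + a) a (W x))"
  have \<mu>_pos: "0 < \<mu>" and \<sigma>_pos: "0 < \<sigma>"
    using assms(7,8) by (auto simp: \<mu>_def \<sigma>_def)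
  have "AE x in M. W x \<le> Ws x"
    using assms(10) by eventually_elim (use \<sigma>_pos in \<open>simp add: W_def Ws_def divide_right_mono\<close>)
  from expectation_truncated_increment_le_ramp_diff[OF _ _ this assms(11)]
  have "?T \<le> ?R"
    using assms(2,3) unfolding W_def Ws_def by measurable
  have ramp_cont: "continuous_on UNIV (\<lambda>y. ramp (z + a) a ((y - \<mu>) / \<sigma>))"
    using \<sigma>_pos by (intro continuous_on_compose2[OF continuous_on_ramp] continuous_intros) auto
  from size_bias_increment_le[OF assms(9,5,6,3) ramp_cont abs_ramp_le] assms(11)
  have "\<mu> * ?R \<le> a * \<sigma>"
    by (simp add: \<mu>_def \<sigma>_def W_def Ws_def)
  then have "\<mu> / \<sigma> * ?T \<le> a"
    using \<open>?T \<le> ?R\<close> \<mu>_pos \<sigma>_pos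
    by (simp add: pos_divide_le_eq) (meson mult_left_mono order_trans less_imp_le)
  moreover have "(\<lambda>x. (Ws x - W x) * indicator {t. t \<le> a} (Ws x - W x) * indicator {z..z + a} (W x))
      = (\<lambda>x. (Ws x - W x) * indicator {t. Ws t - W t \<le> a} x
               * indicator {t. z \<le> W t \<and> W t \<le> z + a} x)"
    by (simp add: fun_eq_iff indicator_def)
  ultimately show ?thesis
    unfolding Let_def W_def Ws_def \<mu>_def \<sigma>_def by simp
qed

end
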